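(* Let $f:\mathbb{R}^n\to\mathbb{R}$ be continuously differentiable, let $s$ be a positive integer with $s\le n$, and let $\eta>0$. A point $\mathbf x\in\mathbb{R}^n$ is an $\eta$-stationary point of the problem $\min\{f(\mathbf x):\|\mathbf x\|_0\le s\}$ if and only if there exists $T\in\mathcal{T}(\mathbf x;\eta)$ with $F_\eta(\mathbf x;T)=0$. Furthermore, a point $\mathbf x\in\mathbb{R}^n$ satisfies the fixed-point equation $\mathbf x=\mathcal{P}_s(\mathbf x-\eta\nabla f(\mathbf x))$ (i.e. $\mathcal{P}_s(\mathbf x-\eta\nabla f(\mathbf x))=\{\mathbf x\}$) if and only if $F_\eta(\mathbf x;T)=0$ for every $T\in\mathcal{T}(\mathbf x;\eta)$.
   Context: $\|\mathbf x\|_0$ is the number of nonzero entries of $\mathbf x$; $\mathbf x$ is $s$-sparse if $\|\mathbf x\|_0\le s$; $\mathrm{supp}(\mathbf x)$ is the set of indices of nonzero entries. For $T\subseteq\{1,\dots,n\}$, $T^c=\{1,\dots,n\}\setminus T$, $\mathbf x_T$ is the subvector of $\mathbf x$ indexed by $T$, and $\nabla_T f(\mathbf x)=(\nabla f(\mathbf x))_T$. The hard-thresholding map is the set-valued map $\mathcal{P}_s(\mathbf x)=\mathrm{argmin}_{\mathbf z}\{\|\mathbf x-\mathbf z\|:\|\mathbf z\|_0\le s\}$ (Euclidean norm), i.e. the set of vectors obtained by keeping $s$ largest-magnitude entries of $\mathbf x$ and zeroing the rest. An $s$-sparse vector $\mathbf x^*$ is an $\eta$-stationary point if $\mathbf x^*\in\mathcal{P}_s(\mathbf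 x^*-\eta\nabla f(\mathbf x^* ))$. Define $\mathcal{T}(\mathbf x;\eta)=\{T\subseteq\{1,\dots,n\}: |T|=s,\ T\supseteq\mathrm{supp}(\mathbf z)\text{ for some }\mathbf z\in\mathcal{P}_s(\mathbf x-\eta\nabla f(\mathbf x))\}$, and for $T\in\mathcal{T}(\mathbf x;\eta)$ define $F_\eta(\mathbf x;T)=\begin{bmatrix}\nabla_T f(\mathbf x)\\ \mathbf x_{T^c}\end{bmatrix}\in\mathbb{R}^n$. *)

theory Defs
  imports "HOL-Analysis.Analysis"
begin

text \<open>Vectors in R^n are modelled as real^'n with n = CARD('n).\<close>

definition supp :: "real^'n \<Rightarrow> 'n set" where
  "supp x = {i. x $ i \<noteq> 0}"

definition l0norm :: "real^'n \<Rightarrow> nat" where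
  "l0norm x = card (supp x)"

definition Ps :: "nat \<Rightarrow> real^'n \<Rightarrow> (real^'n) set" where
  "Ps s x = {z. l0norm z \<le> s \<and> (\<forall>w. l0norm w \<le> s \<longrightarrow> norm (x - z) \<le> norm (x - w))}"

text \<open>g plays the role of the gradient of f.\<close>
definition eta_stationary :: "(real^'n \<Rightarrow> real^'n) \<Rightarrow> nat \<Rightarrow> real \<Rightarrow> real^'n \<Rightarrow> bool" where
  "eta_stationary g s \<eta> x \<longleftrightarrow> l0norm x \<le> s \<and> x \<in> Ps s (x - \<eta> *\<^sub>R g x)"

definition Tset :: "(real^'n \<Rightarrow> real^'n) \<Rightarrow> nat \<Rightarrow> real \<Rightarrow> real^'n \<Rightarrow> 'n set set" where
  "Tset g s \<eta> x = {T. card T = s \<and> (\<exists>z \<in> Ps s (x - \<eta> *\<^sub>R g x). supp z \<subseteq> T)}"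

definition Feta :: "(real^'n \<Rightarrow> real^'n) \<Rightarrow> real^'n \<Rightarrow> 'n set \<Rightarrow> real^'n" where
  "Feta g x T = (\<chi> i. if i \<in> T then g x $ i else x $ i)"

end

theory Submission
  imports Defs
begin

text \<open>Write \<open>y = x - \<eta> \<nabla>f(x)\<close> and let \<open>y\<^sub>T\<close> keep the entries of \<open>y\<close> on \<open>T\<close> and zero the rest.
  Since \<open>\<eta> \<noteq> 0\<close>, \<open>F\<^sub>\<eta>(x;T) = 0\<close> says exactly \<open>x = y\<^sub>T\<close>. Two facts about best \<open>s\<close>-term
  approximations of \<open>y\<close> then give both equivalences: if \<open>z \<in> P\<^sub>s(y)\<close> and \<open>supp z \<subseteq> T\<close>
  with \<open>|T| = s\<close>, then \<open>z = y\<^sub>T\<close> (replacing a coordinate \<open>j \<in> T\<close> of \<open>z\<close> by \<open>y\<^sub>j\<close> keeps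
  \<open>z\<close> \<open>s\<close>-sparse and, by Pythagoras, moves it strictly closer to \<open>y\<close> unless \<open>z\<^sub>j = y\<^sub>j\<close>); and \<open>y\<^sub>T \<in> P\<^sub>s(y)\<close> for every such \<open>T\<close> (by Pythagoras,
  \<open>y\<^sub>T\<close> is at least as close to \<open>y\<close> as \<open>z\<close>).\<close>

definition vec_restrict :: "'n set \<Rightarrow> real^'n \<Rightarrow> real^'n" where
  "vec_restrict T y = (\<chi> i. if i \<in> T then y $ i else 0)"

definition Ps_supports :: "nat \<Rightarrow> real^'n \<Rightarrow> 'n set set" where
  "Ps_supports s y = {T. card T = s \<and> (\<exists>z \<in> Ps s y. supp z \<subseteq> T)}"

lemma supp_vec_restrict_subset: "supp (vec_restrict T y) \<subseteq> T"
  by (auto simp: supp_def vec_restrict_def)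

lemma l0norm_le_card: "supp x \<subseteq> T \<Longrightarrow> l0norm x \<le> card T"
  by (simp add: l0norm_def card_mono)

lemma inner_eq_0_if_supp_disjoint:
  fixes a b :: "real^'n"
  assumes "supp a \<inter> supp b = {}"
  shows "a \<bullet> b = 0"
proof -
  have "a $ i * b $ i = 0" for i
    using assms by (auto simp: supp_def)
  then show ?thesis
    by (simp add: inner_vec_def sum.neutral)
qed

lemma norm_diff_Pythagorean_supp:
  fixes y w z :: "real^'n"
  assumes "supp (y - w) \<inter> supp (w - z) = {}"
  shows "(norm (y - z))\<^sup>2 = (norm (y - w))\<^sup>2 + (norm (w - z))\<^sup>2"
proof -
  have "orthogonal (y - w) (w - z)"
    using inner_eq_0_if_supp_disjoint[OF assms] by (simp add: orthogonal_def)
  moreover have "y - z = (y - w) + (w - z)"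
    by simp
  ultimately show ?thesis
    using norm_add_Pythagorean by metis
qed

lemma Ps_eq_if_orthogonal_competitor:
  fixes y z w :: "real^'n"
  assumes z: "z \<in> Ps s y" and w: "l0norm w \<le> s"
    and disj: "supp (y - w) \<inter> supp (w - z) = {}"
  shows "w = z"
proof -
  have "norm (y - z) \<le> norm (y - w)"
    using z w by (simp add: Ps_def)
  then have "(norm (y - z))\<^sup>2 \<le> (norm (y - w))\<^sup>2"
    by (simp add: power_mono)
  then have "(norm (w - z))\<^sup>2 \<le> 0"
    using norm_diff_Pythagorean_supp[OF disj] by simp
  then show ?thesis
    by simp
qed

lemma Ps_coord_eq:
  fixes y z :: "real^'n"
  assumes z: "z \<in> Ps s y" and card: "card (insert j (supp z)) \<le> s"
  shows "z $ j = y $ j"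
proof -
  define w where "w = (\<chi> i. if i = j then y $ j else z $ i)"
  have "supp w \<subseteq> insert j (supp z)"
    by (auto simp: supp_def w_def)
  then have "l0norm w \<le> s"
    using card l0norm_le_card by (meson order_trans)
  moreover have "supp (y - w) \<inter> supp (w - z) = {}"
    by (auto simp: supp_def w_def)
  ultimately have "w = z"
    by (rule Ps_eq_if_orthogonal_competitor[OF z])
  moreover have "w $ j = y $ j"
    by (simp add: w_def)
  ultimately show ?thesis
    by simp
qed

lemma Ps_eq_vec_restrict:
  fixes y z :: "real^'n"
  assumes z: "z \<in> Ps s y" and T: "card T = s" "supp z \<subseteq> T"
  shows "z = vec_restrict T y"
proof -
  have "z $ i = y $ i" if "i \<in> T" for i
  proof (rule Ps_coord_eq[OF z])
    have "insert i (supp z) \<subseteq> T"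
      using that T by blast
    then show "card (insert i (supp z)) \<le> s"
      using T(1) card_mono[OF finite] by blast
  qed
  moreover have "z $ i = 0" if "i \<notin> T" for i
    using that T by (auto simp: supp_def)
  ultimately show ?thesis
    by (simp add: vec_restrict_def vec_eq_iff)
qed

lemma vec_restrict_mem_Ps:
  fixes y z :: "real^'n"
  assumes z: "z \<in> Ps s y" and T: "card T \<le> s" "supp z \<subseteq> T"
  shows "vec_restrict T y \<in> Ps s y"
proof -
  let ?p = "vec_restrict T y"
  have "supp (y - ?p) \<inter> supp (?p - z) = {}"
    using T by (auto simp: supp_def vec_restrict_def)
  then have "(norm (y - z))\<^sup>2 = (norm (y - ?p))\<^sup>2 + (norm (?p - z))\<^sup>2"
    by (rule norm_diff_Pythagorean_supp)
  then have "(norm (y - ?p))\<^sup>2 \<le> (norm (y - z))\<^sup>2"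
    using zero_le_power2[of "norm (?p - z)"] by linarith
  then have "norm (y - ?p) \<le> norm (y - z)"
    by (rule power2_le_imp_le) simp
  moreover have "l0norm ?p \<le> s"
    using T(1) l0norm_le_card[OF supp_vec_restrict_subset, of T y] by linarith
  ultimately show ?thesis
    using z by (auto simp: Ps_def)
qed

lemma closed_sparse_vectors: "closed {z :: real^'n. l0norm z \<le> s}"
proof -
  have "{z :: real^'n. l0norm z \<le> s} = (\<Union>T \<in> {T. card T \<le> s}. {z. \<forall>i. i \<notin> T \<longrightarrow> z $ i = 0})"
  proof (intro set_eqI iffI)
    fix z :: "real^'n"
    assume "z \<in> {z. l0norm z \<le> s}"
    then show "z \<in> (\<Union>T \<in> {T. card T \<le> s}. {z. \<forall>i. i \<notin> T \<longrightarrow> z $ i = 0})"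
      by (auto simp: l0norm_def supp_def intro!: bexI[of _ "supp z"])
  next
    fix z :: "real^'n"
    assume "z \<in> (\<Union>T \<in> {T. card T \<le> s}. {z. \<forall>i. i \<notin> T \<longrightarrow> z $ i = 0})"
    then obtain T where "card T \<le> s" "supp z \<subseteq> T"
      by (auto simp: supp_def)
    then show "z \<in> {z. l0norm z \<le> s}"
      using l0norm_le_card order_trans by blast
  qed
  then show ?thesis
    by (simp add: closed_Union closed_substandard_cart)
qed

lemma Ps_nonempty: "Ps s (y :: real^'n) \<noteq> {}"
proof -
  have "(0 :: real^'n) \<in> {z. l0norm z \<le> s}"
    by (simp add: l0norm_def supp_def)
  then have "{z :: real^'n. l0norm z \<le> s} \<noteq> {}"
    by blast
  with closed_sparse_vectors obtain z where "z \<in> {z. l0norm z \<le> s}"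
    and "\<And>w. w \<in> {z. l0norm z \<le> s} \<Longrightarrow> dist y z \<le> dist y w"
    by (rule distance_attains_inf[where a = y]) auto
  then have "z \<in> Ps s y"
    by (simp add: Ps_def dist_norm)
  then show ?thesis
    by blast
qed

lemma Ps_supports_exists_superset:
  fixes z :: "real^'n"
  assumes z: "z \<in> Ps s y" and s: "s \<le> CARD('n)"
  obtains T where "T \<in> Ps_supports s y" "supp z \<subseteq> T"
proof -
  have "card (supp z) \<le> s"
    using z by (simp add: Ps_def l0norm_def)
  then obtain T where "supp z \<subseteq> T" "card T = s"
    using exists_subset_between[of "supp z" s UNIV] s by auto
  then show ?thesis
    using that z by (auto simp: Ps_supports_def)
qed

lemma Ps_mem_iff:
  fixes x y :: "real^'n"
  assumes "s \<le> CARD('n)"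
  shows "x \<in> Ps s y \<longleftrightarrow> (\<exists>T \<in> Ps_supports s y. x = vec_restrict T y)"
proof
  assume x: "x \<in> Ps s y"
  then obtain T where "T \<in> Ps_supports s y" "supp x \<subseteq> T"
    using Ps_supports_exists_superset assms by blast
  then show "\<exists>T \<in> Ps_supports s y. x = vec_restrict T y"
    using Ps_eq_vec_restrict[OF x] by (auto simp: Ps_supports_def)
next
  assume "\<exists>T \<in> Ps_supports s y. x = vec_restrict T y"
  then show "x \<in> Ps s y"
    using vec_restrict_mem_Ps by (auto simp: Ps_supports_def)
qed

lemma Ps_eq_singleton_iff:
  fixes x y :: "real^'n"
  assumes "s \<le> CARD('n)"
  shows "Ps s y = {x} \<longleftrightarrow> (\<forall>T \<in> Ps_supports s y. x = vec_restrict T y)"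
proof
  assume x: "Ps s y = {x}"
  show "\<forall>T \<in> Ps_supports s y. x = vec_restrict T y"
  proof
    fix T
    assume "T \<in> Ps_supports s y"
    then obtain z where "z \<in> Ps s y" "card T \<le> s" "supp z \<subseteq> T"
      by (auto simp: Ps_supports_def)
    then have "vec_restrict T y \<in> Ps s y"
      by (rule vec_restrict_mem_Ps)
    then show "x = vec_restrict T y"
      using x by simp
  qed
next
  assume x: "\<forall>T \<in> Ps_supports s y. x = vec_restrict T y"
  have "z = x" if z: "z \<in> Ps s y" for z
  proof -
    obtain T where "T \<in> Ps_supports s y" "supp z \<subseteq> T"
      using Ps_supports_exists_superset[OF z assms] by blast
    then show ?thesis
      using Ps_eq_vec_restrict[OF z] x by (auto simp: Ps_supports_def)
  qed
  then show "Ps s y = {x}"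
    using Ps_nonempty by blast
qed

lemma Feta_eq_0_iff:
  assumes "\<eta> \<noteq> 0"
  shows "Feta g x T = 0 \<longleftrightarrow> x = vec_restrict T (x - \<eta> *\<^sub>R g x)"
  using assms by (auto simp: Feta_def vec_restrict_def vec_eq_iff)

lemma Tset_eq_Ps_supports: "Tset g s \<eta> x = Ps_supports s (x - \<eta> *\<^sub>R g x)"
  by (simp add: Tset_def Ps_supports_def)

lemma eta_stationary_iff_mem_Ps: "eta_stationary g s \<eta> x \<longleftrightarrow> x \<in> Ps s (x - \<eta> *\<^sub>R g x)"
  by (auto simp: eta_stationary_def Ps_def)

theorem lemma4:
  fixes f :: "real^'n \<Rightarrow> real" and g :: "real^'n \<Rightarrow> real^'n"
    and s :: nat and \<eta> :: real and x :: "real^'n"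
  assumes grad: "\<And>y. (f has_derivative (\<lambda>h. g y \<bullet> h)) (at y)"
    and C1: "continuous_on UNIV g"
    and s_pos: "0 < s" and s_le: "s \<le> CARD('n)"
    and eta_pos: "0 < \<eta>"
  shows "(eta_stationary g s \<eta> x \<longleftrightarrow> (\<exists>T \<in> Tset g s \<eta> x. Feta g x T = 0))
       \<and> (Ps s (x - \<eta> *\<^sub>R g x) = {x} \<longleftrightarrow> (\<forall>T \<in> Tset g s \<eta> x. Feta g x T = 0))"
proof -
  have F: "Feta g x T = 0 \<longleftrightarrow> x = vec_restrict T (x - \<eta> *\<^sub>R g x)" for T
    using eta_pos by (intro Feta_eq_0_iff) simp
  show ?thesis
    unfolding F Tset_eq_Ps_supports eta_stationary_iff_mem_Ps
    using Ps_mem_iff[OF s_le] Ps_eq_singleton_iff[OF s_le] by blast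
qed

end
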